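(* Let $Q$ be a finite connected quandle, $e\in Q$, and let $K_1,K_2$ be oriented knots. If there is a knot $P$ such that $\mathrm{Col}_Q(K_1\# P)\neq \mathrm{Col}_Q(K_2\# P)$, then $\Psi^e_Q(K_1)\neq\Psi^e_Q(K_2)$.
   Context: A quandle is a set $Q$ with operation $*$ satisfying $a*a=a$; unique right division ($\forall b,c\ \exists! a: a*b=c$); and $(a*b)*c=(a*c)*(b*c)$. $R_a(x)=x*a$; $\mathrm{Inn}(Q)$ is the group generated by the $R_a$; $Q$ is connected if $\mathrm{Inn}(Q)$ is transitive on $Q$. A coloring of an oriented knot or tangle diagram by $Q$ assigns elements of $Q$ to arcs so that at each crossing with over-arc color $y$ and incoming under-arc color $x$ (standard sign convention) the other under-arc has color $x*y$. $\mathrm{Col}_Q(K)$ is the number of colorings of a diagram of $K$ by $Q$; $K_1\#P$ is the connected sum. A $1$-tangle is a properly embedded oriented arc in a $3$-ball up to isotopy rel boundary, drawn oriented top to bottom with top arc $b_0$ and bottom arc $b_1$; its closure joins the ends by a trivial arc; every knot $K$ is the closure of a $1$-tangle $T$, unique up to isotopy (end arcs need not have equal colors). For $e\in Q$, $\mathrm{Col}^e_Q(T)$ is the set of colorings $C$ of $T$ with $C(b_0)=e$, and $\Psi^e_Q(K)=\sum_{C\in \mathrm{Col}^e_Q(T)} C(b_1)$, an element of the free $\mathbb{Z}$-module with basis $F_e=\{b\in Q: R_b=R_e\}$. *)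

theory Defs
  imports Main
begin

definition quandle :: "'a set \<Rightarrow> ('a \<Rightarrow> 'a \<Rightarrow> 'a) \<Rightarrow> bool" where
  "quandle Q op \<longleftrightarrow>
     (\<forall>a\<in>Q. \<forall>b\<in>Q. op a b \<in> Q) \<and>
     (\<forall>a\<in>Q. op a a = a) \<and>
     (\<forall>b\<in>Q. \<forall>c\<in>Q. \<exists>!a. a \<in> Q \<and> op a b = c) \<and>
     (\<forall>a\<in>Q. \<forall>b\<in>Q. \<forall>c\<in>Q. op (op a b) c = op (op a c) (op b c))"

definition Rmap :: "('a \<Rightarrow> 'a \<Rightarrow> 'a) \<Rightarrow> 'a \<Rightarrow> 'a \<Rightarrow> 'a" where
  "Rmap op a = (\<lambda>x. op x a)"

definition Rinv :: "'a set \<Rightarrow> ('a \<Rightarrow> 'a \<Rightarrow> 'a) \<Rightarrow> 'a \<Rightarrow> 'a \<Rightarrow> 'a" where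
  "Rinv Q op a = (\<lambda>x. THE y. y \<in> Q \<and> op y a = x)"

text \<open>Inn(Q): the group generated by the R_a (as maps, relevant only on Q).\<close>
inductive_set Inn :: "'a set \<Rightarrow> ('a \<Rightarrow> 'a \<Rightarrow> 'a) \<Rightarrow> ('a \<Rightarrow> 'a) set"
  for Q op where
  Inn_id: "id \<in> Inn Q op"
| Inn_R: "a \<in> Q \<Longrightarrow> g \<in> Inn Q op \<Longrightarrow> Rmap op a \<circ> g \<in> Inn Q op"
| Inn_Rinv: "a \<in> Q \<Longrightarrow> g \<in> Inn Q op \<Longrightarrow> Rinv Q op a \<circ> g \<in> Inn Q op"

definition connected_quandle :: "'a set \<Rightarrow> ('a \<Rightarrow> 'a \<Rightarrow> 'a) \<Rightarrow> bool" where
  "connected_quandle Q op \<longleftrightarrow> (\<forall>x\<in>Q. \<forall>y\<in>Q. \<exists>g\<in>Inn Q op. g x = y)"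

text \<open>A 1-tangle diagram with n crossings, traversed top to bottom, is encoded by
  the list of its n under-passages in order. The arcs are numbered 0..n: arc i is the
  incoming under-arc of the i-th under-passage and arc i+1 the outgoing one; arc 0 is
  the top arc b0 and arc n the bottom arc b1. The entry (j, s) of crossing i records
  the index j of the over-arc and the sign s of the crossing (True = positive).\<close>
type_synonym tangle = "(nat \<times> bool) list"

definition wf_tangle :: "tangle \<Rightarrow> bool" where
  "wf_tangle T \<longleftrightarrow> (\<forall>(j, s)\<in>set T. j \<le> length T)"

text \<open>Coloring condition at a crossing: over colour y, under arcs x (before) and x' (after).
  Positive crossing: x' = x * y;  negative crossing (incoming under-arc is the other one):
  x = x' * y.\<close>
definition crossing_ok :: "('a \<Rightarrow> 'a \<Rightarrow> 'a) \<Rightarrow> bool \<Rightarrow> 'a \<Rightarrow> 'a \<Rightarrow> 'a \<Rightarrow> bool" where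
  "crossing_ok op s x x' y \<longleftrightarrow> (if s then x' = op x y else x = op x' y)"

definition colorings :: "'a set \<Rightarrow> ('a \<Rightarrow> 'a \<Rightarrow> 'a) \<Rightarrow> tangle \<Rightarrow> 'a list set" where
  "colorings Q op T = {C. length C = Suc (length T) \<and> set C \<subseteq> Q \<and>
      (\<forall>i<length T. crossing_ok op (snd (T ! i)) (C ! i) (C ! Suc i) (C ! fst (T ! i)))}"

text \<open>Col_Q of the closure of T (closure identifies the top and bottom arcs).\<close>
definition Col_closure :: "'a set \<Rightarrow> ('a \<Rightarrow> 'a \<Rightarrow> 'a) \<Rightarrow> tangle \<Rightarrow> nat" where
  "Col_closure Q op T = card {C \<in> colorings Q op T. C ! 0 = C ! length T}"

text \<open>Composition of 1-tangles (T1 on top of T2); its closure is the connected sum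
  of the closures.\<close>
definition tangle_comp :: "tangle \<Rightarrow> tangle \<Rightarrow> tangle" where
  "tangle_comp T1 T2 = T1 @ map (\<lambda>(j, s). (j + length T1, s)) T2"

text \<open>Psi^e_Q(K) as an element of the free Z-module on Q (supported in F_e):
  the coefficient of b is the number of colorings C with C(b0) = e and C(b1) = b.\<close>
definition Psi :: "'a set \<Rightarrow> ('a \<Rightarrow> 'a \<Rightarrow> 'a) \<Rightarrow> 'a \<Rightarrow> tangle \<Rightarrow> 'a \<Rightarrow> int" where
  "Psi Q op e T = (\<lambda>b. int (card {C \<in> colorings Q op T. C ! 0 = e \<and> C ! length T = b}))"

end

theory Submission
  imports Defs
begin

(* Let N_T(a, b) be the number of colorings of the 1-tangle T with top colour a and bottom
   colour b. Cutting the closure of T # P at the two junction arcs gives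
   Col(T # P) = sum over a, b of N_T(a, b) * N_P(b, a).
   Inner automorphisms of Q act on colorings, so N_T(g a, g b) = N_T(a, b) for g in Inn(Q);
   since Q is connected, every pair (a, b) is moved by some g to a pair with top colour e.
   Hence N_T is determined by Psi^e(T) = sum over b of N_T(e, b) b, and equal Psi^e force
   equal numbers of colorings of T1 # P and T2 # P. *)

lemma quandle_closed: "quandle Q op \<Longrightarrow> a \<in> Q \<Longrightarrow> b \<in> Q \<Longrightarrow> op a b \<in> Q"
  unfolding quandle_def by blast

lemma quandle_right_div: "quandle Q op \<Longrightarrow> b \<in> Q \<Longrightarrow> c \<in> Q \<Longrightarrow> \<exists>!a. a \<in> Q \<and> op a b = c"
  unfolding quandle_def by blast

lemma quandle_right_distrib:
  "quandle Q op \<Longrightarrow> a \<in> Q \<Longrightarrow> b \<in> Q \<Longrightarrow> c \<in> Q \<Longrightarrow> op (op a b) c = op (op a c) (op b c)"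
  unfolding quandle_def by blast

lemma quandle_right_cancel:
  assumes "quandle Q op" "a \<in> Q" "x \<in> Q" "y \<in> Q" "op x a = op y a"
  shows "x = y"
  using quandle_right_div[OF assms(1,2) quandle_closed[OF assms(1,3,2)]] assms(3-5) by auto

definition quandle_aut :: "'a set \<Rightarrow> ('a \<Rightarrow> 'a \<Rightarrow> 'a) \<Rightarrow> ('a \<Rightarrow> 'a) \<Rightarrow> bool" where
  "quandle_aut Q op g \<longleftrightarrow> bij_betw g Q Q \<and> (\<forall>x\<in>Q. \<forall>y\<in>Q. g (op x y) = op (g x) (g y))"

lemma quandle_autD:
  assumes "quandle_aut Q op g"
  shows "bij_betw g Q Q" and "x \<in> Q \<Longrightarrow> g x \<in> Q" and "x \<in> Q \<Longrightarrow> y \<in> Q \<Longrightarrow> g (op x y) = op (g x) (g y)"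
  using assms bij_betw_apply by (fastforce simp: quandle_aut_def)+

lemma quandle_aut_id: "quandle_aut Q op id"
  by (simp add: quandle_aut_def)

lemma quandle_aut_comp: "quandle_aut Q op f \<Longrightarrow> quandle_aut Q op g \<Longrightarrow> quandle_aut Q op (f \<circ> g)"
  by (auto simp: quandle_aut_def bij_betw_trans bij_betw_apply)

lemma quandle_aut_cong:
  assumes "quandle Q op" "quandle_aut Q op g" "\<And>x. x \<in> Q \<Longrightarrow> f x = g x"
  shows "quandle_aut Q op f"
  using assms quandle_closed[OF assms(1)] bij_betw_cong[of Q f g Q]
  by (simp add: quandle_aut_def)

lemma quandle_aut_inv_into:
  assumes "quandle Q op" "quandle_aut Q op g"
  shows "quandle_aut Q op (inv_into Q g)"
proof -
  have g: "bij_betw g Q Q" using quandle_autD(1)[OF assms(2)] .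
  have "inv_into Q g (op x y) = op (inv_into Q g x) (inv_into Q g y)" if "x \<in> Q" "y \<in> Q" for x y
  proof -
    let ?u = "inv_into Q g x" and ?v = "inv_into Q g y"
    have "?u \<in> Q" "?v \<in> Q" "g ?u = x" "g ?v = y"
      using that g by (auto simp: bij_betw_def inv_into_into f_inv_into_f)
    then have "g (op ?u ?v) = op x y" and "op ?u ?v \<in> Q"
      using quandle_autD(3)[OF assms(2)] quandle_closed[OF assms(1)] by auto
    then show ?thesis
      using g by (metis bij_betw_def inv_into_f_f)
  qed
  then show ?thesis
    using g by (simp add: quandle_aut_def bij_betw_inv_into)
qed

lemma quandle_aut_Rmap:
  assumes "quandle Q op" "a \<in> Q"
  shows "quandle_aut Q op (Rmap op a)"
  unfolding quandle_aut_def Rmap_def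
proof
  show "bij_betw (\<lambda>x. op x a) Q Q"
  proof (rule bij_betwI')
    show "(op x a = op y a) = (x = y)" if "x \<in> Q" "y \<in> Q" for x y
      using quandle_right_cancel[OF assms that] by blast
    show "op x a \<in> Q" if "x \<in> Q" for x
      using quandle_closed[OF assms(1) that assms(2)] .
    show "\<exists>x\<in>Q. y = op x a" if "y \<in> Q" for y
      using quandle_right_div[OF assms(1,2) that] by auto
  qed
  show "\<forall>x\<in>Q. \<forall>y\<in>Q. op (op x y) a = op (op x a) (op y a)"
    using quandle_right_distrib[OF assms(1) _ _ assms(2)] by blast
qed

lemma Rinv_eq_inv_into_Rmap:
  assumes "quandle Q op" "a \<in> Q" "x \<in> Q"
  shows "Rinv Q op a x = inv_into Q (Rmap op a) x"
proof -
  have R: "bij_betw (Rmap op a) Q Q" using quandle_autD(1)[OF quandle_aut_Rmap[OF assms(1,2)]] .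
  let ?y = "inv_into Q (Rmap op a) x"
  have "?y \<in> Q" "op ?y a = x"
    using R assms(3) bij_betw_inv_into_right[OF R] bij_betw_apply[OF bij_betw_inv_into[OF R]]
    by (auto simp: Rmap_def)
  then show ?thesis
    unfolding Rinv_def using quandle_right_div[OF assms] by (auto intro: the1_equality)
qed

lemma quandle_aut_Rinv:
  assumes "quandle Q op" "a \<in> Q"
  shows "quandle_aut Q op (Rinv Q op a)"
  using quandle_aut_inv_into[OF assms(1) quandle_aut_Rmap[OF assms]]
  by (rule quandle_aut_cong[OF assms(1)]) (rule Rinv_eq_inv_into_Rmap[OF assms])

lemma Inn_quandle_aut:
  assumes "quandle Q op" "g \<in> Inn Q op"
  shows "quandle_aut Q op g"
  using assms(2)
proof induction
  case Inn_id
  show ?case by (rule quandle_aut_id)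
next
  case (Inn_R a g)
  then show ?case by (intro quandle_aut_comp quandle_aut_Rmap[OF assms(1)])
next
  case (Inn_Rinv a g)
  then show ?case by (intro quandle_aut_comp quandle_aut_Rinv[OF assms(1)])
qed

lemma wf_tangle_nth: "wf_tangle T \<Longrightarrow> i < length T \<Longrightarrow> fst (T ! i) \<le> length T"
  unfolding wf_tangle_def by (metis case_prod_beta nth_mem)

(* wf_tangle is needed: an over-arc index beyond the last arc reads an unspecified list entry,
   on which map g does not act as g. *)
lemma map_in_colorings:
  assumes "quandle_aut Q op g" "wf_tangle T" "C \<in> colorings Q op T"
  shows "map g C \<in> colorings Q op T"
proof -
  have C: "length C = Suc (length T)" "set C \<subseteq> Q"
    "\<And>i. i < length T \<Longrightarrow> crossing_ok op (snd (T ! i)) (C ! i) (C ! Suc i) (C ! fst (T ! i))"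
    using assms(3) by (auto simp: colorings_def)
  have "crossing_ok op (snd (T ! i)) (map g C ! i) (map g C ! Suc i) (map g C ! fst (T ! i))"
    if i: "i < length T" for i
  proof -
    have j: "fst (T ! i) < length C" using wf_tangle_nth[OF assms(2) i] C(1) by simp
    then have "C ! i \<in> Q" "C ! Suc i \<in> Q" "C ! fst (T ! i) \<in> Q"
      using C(1,2) i by (auto intro!: subsetD[OF C(2)])
    then show ?thesis
      using C(1) C(3)[OF i] quandle_autD(3)[OF assms(1)] i j by (auto simp: crossing_ok_def)
  qed
  moreover have "set (map g C) \<subseteq> Q"
    using C(2) quandle_autD(2)[OF assms(1)] by auto
  ultimately show ?thesis
    using C(1) by (simp add: colorings_def)
qed

definition end_colorings :: "'a set \<Rightarrow> ('a \<Rightarrow> 'a \<Rightarrow> 'a) \<Rightarrow> tangle \<Rightarrow> 'a \<Rightarrow> 'a \<Rightarrow> 'a list set" where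
  "end_colorings Q op T a b = {C \<in> colorings Q op T. C ! 0 = a \<and> C ! length T = b}"

lemma Psi_eq_card_end_colorings: "Psi Q op e T b = int (card (end_colorings Q op T e b))"
  unfolding Psi_def end_colorings_def ..

lemma finite_colorings: "finite Q \<Longrightarrow> finite (colorings Q op T)"
  by (rule finite_subset[OF _ finite_lists_length_eq[of Q "Suc (length T)"]])
     (auto simp: colorings_def)

lemma finite_end_colorings: "finite Q \<Longrightarrow> finite (end_colorings Q op T a b)"
  by (simp add: end_colorings_def finite_colorings)

lemma map_in_end_colorings:
  assumes "quandle_aut Q op g" "wf_tangle T" "C \<in> end_colorings Q op T a b"
  shows "map g C \<in> end_colorings Q op T (g a) (g b)"
proof -
  have C: "C \<in> colorings Q op T" "C ! 0 = a" "C ! length T = b"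
    using assms(3) by (simp_all add: end_colorings_def)
  moreover have "length C = Suc (length T)"
    using C(1) by (simp add: colorings_def)
  ultimately show ?thesis
    by (simp add: end_colorings_def map_in_colorings[OF assms(1,2)])
qed

lemma bij_betw_map_end_colorings:
  assumes "quandle Q op" "quandle_aut Q op g" "wf_tangle T" "a \<in> Q" "b \<in> Q"
  shows "bij_betw (map g) (end_colorings Q op T a b) (end_colorings Q op T (g a) (g b))"
proof (rule bij_betw_byWitness[where f' = "map (inv_into Q g)"])
  let ?g' = "inv_into Q g"
  have g: "inj_on g Q" "g ` Q = Q" using quandle_autD(1)[OF assms(2)] by (simp_all add: bij_betw_def)
  have Q: "set C \<subseteq> Q" if "C \<in> end_colorings Q op T c d" for C c d
    using that by (simp add: end_colorings_def colorings_def)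
  show "\<forall>C\<in>end_colorings Q op T a b. map ?g' (map g C) = C"
  proof
    fix C assume "C \<in> end_colorings Q op T a b"
    then have "set C \<subseteq> Q" by (rule Q)
    show "map ?g' (map g C) = C"
      unfolding map_map
    proof (rule map_idI)
      show "(?g' \<circ> g) x = x" if "x \<in> set C" for x
        using that \<open>set C \<subseteq> Q\<close> g(1) by auto
    qed
  qed
  show "\<forall>D\<in>end_colorings Q op T (g a) (g b). map g (map ?g' D) = D"
  proof
    fix D assume "D \<in> end_colorings Q op T (g a) (g b)"
    then have "set D \<subseteq> Q" by (rule Q)
    show "map g (map ?g' D) = D"
      unfolding map_map
    proof (rule map_idI)
      show "(g \<circ> ?g') x = x" if "x \<in> set D" for x
        using that \<open>set D \<subseteq> Q\<close> g(2) f_inv_into_f[of x g Q] by auto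
    qed
  qed
  show "map g ` end_colorings Q op T a b \<subseteq> end_colorings Q op T (g a) (g b)"
    using map_in_end_colorings[OF assms(2,3)] by blast
  have "map ?g' D \<in> end_colorings Q op T a b" if "D \<in> end_colorings Q op T (g a) (g b)" for D
    using map_in_end_colorings[OF quandle_aut_inv_into[OF assms(1,2)] assms(3) that] g(1) assms(4,5)
    by simp
  then show "map ?g' ` end_colorings Q op T (g a) (g b) \<subseteq> end_colorings Q op T a b"
    by blast
qed

lemma card_end_colorings_quandle_aut:
  assumes "quandle Q op" "quandle_aut Q op g" "wf_tangle T" "a \<in> Q" "b \<in> Q"
  shows "card (end_colorings Q op T (g a) (g b)) = card (end_colorings Q op T a b)"
  using bij_betw_same_card[OF bij_betw_map_end_colorings[OF assms]] by simp

lemma card_end_colorings_eq_if_Psi_eq: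
  assumes "quandle Q op" "connected_quandle Q op" "e \<in> Q" "wf_tangle T1" "wf_tangle T2"
    and "Psi Q op e T1 = Psi Q op e T2" and "a \<in> Q" "b \<in> Q"
  shows "card (end_colorings Q op T1 a b) = card (end_colorings Q op T2 a b)"
proof -
  obtain g where "g \<in> Inn Q op" "g e = a"
    using assms(2,3,7) unfolding connected_quandle_def by blast
  then have g: "quandle_aut Q op g" "g e = a"
    using Inn_quandle_aut[OF assms(1)] by blast+
  have "b \<in> g ` Q"
    using quandle_autD(1)[OF g(1)] assms(8) by (simp add: bij_betw_def)
  then obtain b' where b': "b' \<in> Q" "g b' = b"
    by blast
  have "card (end_colorings Q op T1 a b) = card (end_colorings Q op T1 e b')"
    using card_end_colorings_quandle_aut[OF assms(1) g(1) assms(4,3) b'(1)] g b' by simp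
  also have "\<dots> = card (end_colorings Q op T2 e b')"
    using fun_cong[OF assms(6), of b'] by (simp add: Psi_eq_card_end_colorings)
  also have "\<dots> = card (end_colorings Q op T2 a b)"
    using card_end_colorings_quandle_aut[OF assms(1) g(1) assms(5,3) b'(1)] g b' by simp
  finally show ?thesis .
qed

lemma length_tangle_comp [simp]: "length (tangle_comp T P) = length T + length P"
  by (simp add: tangle_comp_def)

lemma nth_tangle_comp_left: "i < length T \<Longrightarrow> tangle_comp T P ! i = T ! i"
  by (simp add: tangle_comp_def nth_append)

lemma nth_tangle_comp_right:
  "k < length P \<Longrightarrow> tangle_comp T P ! (length T + k) = (length T + fst (P ! k), snd (P ! k))"
  by (simp add: tangle_comp_def nth_append split: prod.splits)

lemma take_in_colorings_tangle_comp:
  assumes "wf_tangle T" "C \<in> colorings Q op (tangle_comp T P)"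
  shows "take (Suc (length T)) C \<in> colorings Q op T"
proof -
  have C: "length C = Suc (length T + length P)" "set C \<subseteq> Q"
    "\<And>i. i < length T + length P \<Longrightarrow> crossing_ok op (snd (tangle_comp T P ! i)) (C ! i) (C ! Suc i)
       (C ! fst (tangle_comp T P ! i))"
    using assms(2) by (auto simp: colorings_def)
  have "crossing_ok op (snd (T ! i)) (take (Suc (length T)) C ! i) (take (Suc (length T)) C ! Suc i)
      (take (Suc (length T)) C ! fst (T ! i))" if "i < length T" for i
    using C(3)[of i] that wf_tangle_nth[OF assms(1) that] by (simp add: nth_tangle_comp_left)
  moreover have "set (take (Suc (length T)) C) \<subseteq> Q"
    using C(2) set_take_subset by fast
  ultimately show ?thesis
    using C(1) by (simp add: colorings_def)
qed

lemma drop_in_colorings_tangle_comp: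
  assumes "wf_tangle P" "C \<in> colorings Q op (tangle_comp T P)"
  shows "drop (length T) C \<in> colorings Q op P"
proof -
  have C: "length C = Suc (length T + length P)" "set C \<subseteq> Q"
    "\<And>i. i < length T + length P \<Longrightarrow> crossing_ok op (snd (tangle_comp T P ! i)) (C ! i) (C ! Suc i)
       (C ! fst (tangle_comp T P ! i))"
    using assms(2) by (auto simp: colorings_def)
  have "crossing_ok op (snd (P ! k)) (drop (length T) C ! k) (drop (length T) C ! Suc k)
      (drop (length T) C ! fst (P ! k))" if "k < length P" for k
    using C(3)[of "length T + k"] that wf_tangle_nth[OF assms(1) that] C(1)
    by (simp add: nth_tangle_comp_right)
  moreover have "set (drop (length T) C) \<subseteq> Q"
    using C(2) set_drop_subset by fast
  ultimately show ?thesis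
    using C(1) by (simp add: colorings_def)
qed

lemma nth_append_tl:
  assumes "length C1 = Suc n" "C1 ! n = C2 ! 0" "k < length C2"
  shows "(C1 @ tl C2) ! (n + k) = C2 ! k"
proof (cases k)
  case 0
  then show ?thesis using assms by (simp add: nth_append)
next
  case (Suc k')
  then show ?thesis using assms by (simp add: nth_append nth_tl)
qed

lemma append_tl_in_colorings_tangle_comp:
  assumes "wf_tangle T" "wf_tangle P" "C1 \<in> colorings Q op T" "C2 \<in> colorings Q op P"
    and "C1 ! length T = C2 ! 0"
  shows "C1 @ tl C2 \<in> colorings Q op (tangle_comp T P)"
proof -
  let ?C = "C1 @ tl C2" and ?n = "length T"
  have C1: "length C1 = Suc ?n" "set C1 \<subseteq> Q"
    "\<And>i. i < ?n \<Longrightarrow> crossing_ok op (snd (T ! i)) (C1 ! i) (C1 ! Suc i) (C1 ! fst (T ! i))"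
    using assms(3) by (auto simp: colorings_def)
  have C2: "length C2 = Suc (length P)" "set C2 \<subseteq> Q"
    "\<And>k. k < length P \<Longrightarrow> crossing_ok op (snd (P ! k)) (C2 ! k) (C2 ! Suc k) (C2 ! fst (P ! k))"
    using assms(4) by (auto simp: colorings_def)
  have right: "?C ! (?n + k) = C2 ! k" if "k \<le> length P" for k
    using nth_append_tl[OF C1(1) assms(5)] C2(1) that by simp
  have "crossing_ok op (snd (tangle_comp T P ! i)) (?C ! i) (?C ! Suc i) (?C ! fst (tangle_comp T P ! i))"
    if i: "i < ?n + length P" for i
  proof (cases "i < ?n")
    case True
    then show ?thesis
      using C1(1,3) wf_tangle_nth[OF assms(1) True] by (simp add: nth_tangle_comp_left nth_append)
  next
    case False
    then obtain k where k: "i = ?n + k" "k < length P"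
      using i by (metis add_diff_inverse_nat add_less_cancel_left)
    then show ?thesis
      using C2(3)[OF k(2)] right[of k] right[of "Suc k"] right[of "fst (P ! k)"]
        wf_tangle_nth[OF assms(2) k(2)]
      by (simp add: nth_tangle_comp_right)
  qed
  moreover have "set ?C \<subseteq> Q"
    using C1(2) C2(2) by (cases C2) auto
  ultimately show ?thesis
    using C1(1) C2(1) by (simp add: colorings_def)
qed

lemma bij_betw_split_closure_colorings:
  assumes "wf_tangle T" "wf_tangle P"
  shows "bij_betw (\<lambda>C. (take (Suc (length T)) C, drop (length T) C))
    {C \<in> colorings Q op (tangle_comp T P). C ! 0 = C ! length (tangle_comp T P)}
    (\<Union>(a, b)\<in>Q \<times> Q. end_colorings Q op T a b \<times> end_colorings Q op P b a)"
    (is "bij_betw ?split ?D ?U")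
proof (rule bij_betw_byWitness[where f' = "\<lambda>(C1, C2). C1 @ tl C2"])
  let ?n = "length T" and ?m = "length P"
  have len: "length C = Suc (length R)" if "C \<in> colorings Q op R" for C R
    using that by (simp add: colorings_def)
  show "\<forall>C\<in>?D. (case ?split C of (C1, C2) \<Rightarrow> C1 @ tl C2) = C"
    using len by (auto simp: tl_drop drop_Suc[symmetric])
  show "\<forall>x\<in>?U. ?split (case x of (C1, C2) \<Rightarrow> C1 @ tl C2) = x"
  proof
    fix x assume "x \<in> ?U"
    then obtain C1 C2 where x: "x = (C1, C2)" "C1 \<in> colorings Q op T" "C2 \<in> colorings Q op P"
      "C1 ! ?n = C2 ! 0"
      by (auto simp: end_colorings_def)
    have "drop ?n C1 = [C2 ! 0]"
      using Cons_nth_drop_Suc[of ?n C1] len[OF x(2)] x(4) by simp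
    moreover have "C2 = C2 ! 0 # tl C2"
      using len[OF x(3)] by (cases C2) auto
    ultimately show "?split (case x of (C1, C2) \<Rightarrow> C1 @ tl C2) = x"
      using x(1) len[OF x(2)] by simp
  qed
  show "?split ` ?D \<subseteq> ?U"
  proof
    fix y assume "y \<in> ?split ` ?D"
    then obtain C where C: "C \<in> colorings Q op (tangle_comp T P)" "C ! 0 = C ! (?n + ?m)"
      and y: "y = ?split C"
      by force
    have L: "length C = Suc (?n + ?m)"
      using len[OF C(1)] by simp
    have "set C \<subseteq> Q"
      using C(1) by (simp add: colorings_def)
    then have ab: "(C ! 0, C ! ?n) \<in> Q \<times> Q"
      using L nth_mem[of 0 C] nth_mem[of ?n C] by auto
    have "take (Suc ?n) C \<in> end_colorings Q op T (C ! 0) (C ! ?n)"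
      using take_in_colorings_tangle_comp[OF assms(1) C(1)] by (simp add: end_colorings_def)
    moreover have "drop ?n C \<in> end_colorings Q op P (C ! ?n) (C ! 0)"
      using drop_in_colorings_tangle_comp[OF assms(2) C(1)] L C(2) by (simp add: end_colorings_def)
    ultimately show "y \<in> ?U"
      using ab y by blast
  qed
  show "(\<lambda>(C1, C2). C1 @ tl C2) ` ?U \<subseteq> ?D"
  proof
    fix y assume "y \<in> (\<lambda>(C1, C2). C1 @ tl C2) ` ?U"
    then obtain C1 C2 where y: "y = C1 @ tl C2" and C1: "C1 \<in> colorings Q op T"
      and C2: "C2 \<in> colorings Q op P" and ends: "C1 ! ?n = C2 ! 0" "C1 ! 0 = C2 ! ?m"
      by (auto simp: end_colorings_def)
    have "y ! 0 = y ! (?n + ?m)"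
      using nth_append_tl[OF len[OF C1] ends(1), of ?m] len[OF C1] len[OF C2] ends(2) y
      by (simp add: nth_append)
    then show "y \<in> ?D"
      using append_tl_in_colorings_tangle_comp[OF assms C1 C2 ends(1)] y by simp
  qed
qed

lemma Col_closure_tangle_comp:
  assumes "finite Q" "wf_tangle T" "wf_tangle P"
  shows "Col_closure Q op (tangle_comp T P) =
    (\<Sum>(a, b)\<in>Q \<times> Q. card (end_colorings Q op T a b) * card (end_colorings Q op P b a))"
proof -
  have "Col_closure Q op (tangle_comp T P) =
      card (\<Union>(a, b)\<in>Q \<times> Q. end_colorings Q op T a b \<times> end_colorings Q op P b a)"
    unfolding Col_closure_def using bij_betw_same_card[OF bij_betw_split_closure_colorings[OF assms(2,3)]] .
  also have "\<dots> = (\<Sum>ab\<in>Q \<times> Q. card ((\<lambda>(a, b). end_colorings Q op T a b \<times> end_colorings Q op P b a) ab))"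
    using finite_end_colorings[OF assms(1)]
    by (intro card_UN_disjoint) (auto simp: assms(1) end_colorings_def)
  also have "\<dots> = (\<Sum>(a, b)\<in>Q \<times> Q. card (end_colorings Q op T a b) * card (end_colorings Q op P b a))"
    by (intro sum.cong) (auto simp: card_cartesian_product)
  finally show ?thesis .
qed

theorem mainTheorem2:
  fixes Q :: "'a set" and op :: "'a \<Rightarrow> 'a \<Rightarrow> 'a" and e :: 'a
    and T1 T2 P :: tangle
  assumes "finite Q" and "quandle Q op" and "connected_quandle Q op" and "e \<in> Q"
    and "wf_tangle T1" and "wf_tangle T2" and "wf_tangle P"
    and "Col_closure Q op (tangle_comp T1 P) \<noteq> Col_closure Q op (tangle_comp T2 P)"
  shows "Psi Q op e T1 \<noteq> Psi Q op e T2"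
proof
  assume "Psi Q op e T1 = Psi Q op e T2"
  then have "card (end_colorings Q op T1 a b) = card (end_colorings Q op T2 a b)"
    if "a \<in> Q" "b \<in> Q" for a b
    using card_end_colorings_eq_if_Psi_eq[OF assms(2-6)] that by blast
  then have "Col_closure Q op (tangle_comp T1 P) = Col_closure Q op (tangle_comp T2 P)"
    unfolding Col_closure_tangle_comp[OF assms(1,5,7)] Col_closure_tangle_comp[OF assms(1,6,7)]
    by (intro sum.cong) auto
  with assms(8) show False ..
qed

end
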